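(* Let $\beta \in (0,d]$ and $1\leq p<+\infty$. Let $Q_0\subset\mathbb{R}^d$ be a cube. If $u \in BMO^\beta(Q_0)$ and $\phi:\mathbb{R}\to\mathbb{R}$ is Lipschitz with $\phi(0)=0$, then $\phi \circ u \in BMO^\beta(Q_0)$ and $$\|\phi \circ u \|_{BMO^{\beta}(Q_0)} \leq \operatorname{Lip}(\phi) \|u\|_{BMO^{\beta}(Q_0)}.$$
   Context: For $\beta\in(0,d]$ and $E\subset\mathbb{R}^d$, the spherical Hausdorff content is $\mathcal{H}^{\beta}_{\infty}(E)= \inf \{\sum_{i} \omega_\beta r_i^\beta : E \subset \bigcup_{i} B(x_i,r_i) \}$ (countable covers by balls), with $\omega_\beta= \pi^{\beta/2}/\Gamma(\beta/2+1)$. A function $f$ is $\mathcal{H}^\beta_\infty$-quasicontinuous if for every $\epsilon>0$ there is an open set $O$ with $\mathcal{H}^\beta_\infty(O)<\epsilon$ and $f|_{O^c}$ continuous. For a set $A$ and non-negative $f$, the Choquet integral is $\int_A f\,d\mathcal{H}^\beta_\infty=\int_0^\infty \mathcal{H}^\beta_\infty(\{x\in A: f(x)>t\})\,dt$. $L^1(Q_0;\mathcal{H}^\beta_\infty)$ is the set of $\mathcal{H}^\beta_\infty$-quasicontinuous $f$ with $\int_{Q_0}|f|\,d\mathcal{H}^\beta_\infty<\infty$. For $u\in L^1(Q_0;\mathcal{H}^\beta_\infty)$, $\|u\|_{BMO^{\beta}(Q_0)}= \sup_{Q \subset Q_0} \inf_{c \in \mathbb{R}} l(Q)^{-\beta}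 \int_{Q} |u-c| \,d\mathcal{H}^{\beta}_\infty$, the supremum over all finite subcubes $Q\subset Q_0$ with sides parallel to those of $Q_0$, $l(Q)$ the side length; $BMO^\beta(Q_0)$ is the set of $u\in L^1(Q_0;\mathcal{H}^\beta_\infty)$ with this quantity finite. $\operatorname{Lip}(\phi)$ is the Lipschitz constant of $\phi$. *)

theory Defs
  imports "HOL-Analysis.Analysis"
begin

definition omega_beta :: "real \<Rightarrow> real" where
  "omega_beta \<beta> = pi powr (\<beta> / 2) / Gamma (\<beta> / 2 + 1)"

text \<open>Spherical Hausdorff content: infimum over countable covers by balls
  (finite covers included via balls of radius 0, which are empty).\<close>
definition hcontent :: "real \<Rightarrow> 'a::euclidean_space set \<Rightarrow> ennreal" where
  "hcontent \<beta> E = (INF r \<in> {r :: nat \<Rightarrow> real. (\<forall>i. r i \<ge> 0) \<and>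
        (\<exists>x :: nat \<Rightarrow> 'a. E \<subseteq> (\<Union>i. ball (x i) (r i)))}.
        (\<Sum>i. ennreal (omega_beta \<beta> * (r i) powr \<beta>)))"

definition choquet :: "real \<Rightarrow> 'a::euclidean_space set \<Rightarrow> ('a \<Rightarrow> real) \<Rightarrow> ennreal" where
  "choquet \<beta> A f = (\<integral>\<^sup>+ t\<in>{0..}. hcontent \<beta> {x \<in> A. f x > t} \<partial>lborel)"

definition quasicontinuous_on :: "real \<Rightarrow> 'a::euclidean_space set \<Rightarrow> ('a \<Rightarrow> real) \<Rightarrow> bool" where
  "quasicontinuous_on \<beta> Q f \<longleftrightarrow>
     (\<forall>\<epsilon>>0. \<exists>U. open U \<and> hcontent \<beta> U < ennreal \<epsilon> \<and> continuous_on (Q - U) f)"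

definition L1_H :: "real \<Rightarrow> 'a::euclidean_space set \<Rightarrow> ('a \<Rightarrow> real) set" where
  "L1_H \<beta> Q = {f. quasicontinuous_on \<beta> Q f \<and> choquet \<beta> Q (\<lambda>x. \<bar>f x\<bar>) < \<infinity>}"

definition cube :: "'a::euclidean_space \<Rightarrow> real \<Rightarrow> 'a set" where
  "cube a l = cbox a (a + l *\<^sub>R One)"

definition bmo_norm :: "real \<Rightarrow> 'a::euclidean_space set \<Rightarrow> ('a \<Rightarrow> real) \<Rightarrow> ennreal" where
  "bmo_norm \<beta> Q0 u = (SUP al \<in> {(a, l). l > 0 \<and> cube a l \<subseteq> Q0}.
      INF c. ennreal ((snd al) powr (-\<beta>)) * choquet \<beta> (cube (fst al) (snd al)) (\<lambda>x. \<bar>u x - c\<bar>))"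

definition BMO :: "real \<Rightarrow> 'a::euclidean_space set \<Rightarrow> ('a \<Rightarrow> real) set" where
  "BMO \<beta> Q0 = {u \<in> L1_H \<beta> Q0. bmo_norm \<beta> Q0 u < \<infinity>}"

definition Lip :: "(real \<Rightarrow> real) \<Rightarrow> real" where
  "Lip \<phi> = (SUP xy \<in> {(x, y). x \<noteq> y}. \<bar>\<phi> (fst xy) - \<phi> (snd xy)\<bar> / \<bar>fst xy - snd xy\<bar>)"

end

theory Submission
  imports Defs
begin

text \<open>Composition with a continuous \<open>\<phi>\<close> preserves quasicontinuity, and
  \<open>\<bar>\<phi> (u x) - \<phi> c\<bar> \<le> Lip \<phi> * \<bar>u x - c\<bar>\<close> pointwise. Since the Choquet integral is
  monotone and positively homogeneous, testing the infimum over constants for \<open>\<phi> \<circ> u\<close>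
  at \<open>\<phi> c\<close> bounds the mean oscillation of \<open>\<phi> \<circ> u\<close> on every cube by \<open>Lip \<phi>\<close> times
  that of \<open>u\<close>.\<close>

lemma borel_measurable_antimono:
  fixes h :: "real \<Rightarrow> 'b::{linorder_topology, second_countable_topology}"
  assumes "antimono h"
  shows "h \<in> borel_measurable borel"
proof (rule borel_measurableI_greater)
  fix y
  have "is_interval {x. y < h x}"
    unfolding is_interval_1 using assms by (auto intro: less_le_trans dest: antimonoD)
  then show "{x \<in> space borel. y < h x} \<in> sets borel"
    using real_interval_borel_measurable by simp
qed

lemma ennreal_mult_INF:
  fixes f :: "'i \<Rightarrow> ennreal"
  assumes "I \<noteq> {}" "0 \<le> c"
  shows "ennreal c * (INF i\<in>I. f i) = (INF i\<in>I. ennreal c * f i)"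
proof -
  have "continuous (at_right (INF i\<in>I. f i)) (\<lambda>x. ennreal c * x)"
    using ennreal_continuous_on_cmult[of "ennreal c" UNIV id]
    by (auto simp: continuous_on_eq_continuous_within intro: continuous_within_subset)
  then show ?thesis
    using continuous_at_Inf_mono[of "\<lambda>x. ennreal c * x" "f ` I"] assms
    by (auto simp: mono_def mult_left_mono image_comp)
qed

lemma lipschitz_on_Lip:
  assumes "lipschitz_on C UNIV \<phi>"
  shows "lipschitz_on (Lip \<phi>) UNIV \<phi>"
proof -
  let ?q = "\<lambda>xy. \<bar>\<phi> (fst xy) - \<phi> (snd xy)\<bar> / \<bar>fst xy - snd xy\<bar>"
  have "?q xy \<le> C" for xy
    using lipschitz_onD[OF assms, of "fst xy" "snd xy"] lipschitz_on_nonneg[OF assms]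
    by (cases "fst xy = snd xy") (auto simp: dist_real_def divide_le_eq)
  then have bdd: "bdd_above (?q ` {(x, y). x \<noteq> y})"
    by (meson bdd_aboveI2)
  have quotient_le: "?q (x, y) \<le> Lip \<phi>" if "x \<noteq> y" for x y
    unfolding Lip_def using cSUP_upper[OF _ bdd, of "(x, y)"] that by auto
  show ?thesis
  proof (rule lipschitz_onI)
    fix x y :: real
    show "dist (\<phi> x) (\<phi> y) \<le> Lip \<phi> * dist x y"
      using quotient_le[of x y] by (cases "x = y") (auto simp: dist_real_def divide_le_eq mult.commute)
  next
    show "0 \<le> Lip \<phi>"
      using quotient_le[of 0 1] by (auto intro: order_trans[rotated])
  qed
qed

lemma hcontent_mono: "A \<subseteq> B \<Longrightarrow> hcontent \<beta> A \<le> hcontent \<beta> B"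
  unfolding hcontent_def by (rule INF_superset_mono) (auto, meson order_trans)

lemma hcontent_empty [simp]: "hcontent \<beta> {} = 0"
proof -
  have "hcontent \<beta> {} \<le> (\<Sum>i. ennreal (omega_beta \<beta> * ((\<lambda>_. 0::real) i) powr \<beta>))"
    unfolding hcontent_def by (rule INF_lower) auto
  then show ?thesis by simp
qed

lemma choquet_mono:
  assumes "\<And>x. x \<in> A \<Longrightarrow> f x \<le> g x"
  shows "choquet \<beta> A f \<le> choquet \<beta> A g"
  unfolding choquet_def
  by (intro nn_integral_mono mult_right_mono hcontent_mono) (use assms in force)+

lemma choquet_cmult:
  assumes "0 \<le> c"
  shows "choquet \<beta> A (\<lambda>x. c * f x) = ennreal c * choquet \<beta> A f"
proof (cases "c = 0")
  case True
  then have "(\<lambda>t. hcontent \<beta> {x \<in> A. c * f x > t} * indicator {0..} t) = (\<lambda>_. 0)"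
    by (auto simp: fun_eq_iff indicator_def)
  then show ?thesis
    unfolding choquet_def using True by simp
next
  case False
  with assms have "0 < c" by simp
  define F where "F t = hcontent \<beta> {x \<in> A. c * f x > t} * indicator {0..} t" for t
  have [measurable]: "(\<lambda>t. hcontent \<beta> {x \<in> A. c * f x > t}) \<in> borel_measurable borel"
    by (intro borel_measurable_antimono antimonoI hcontent_mono) auto
  then have "F \<in> borel_measurable borel"
    unfolding F_def by measurable
  then have "(\<integral>\<^sup>+t. F t \<partial>lborel) = ennreal c * (\<integral>\<^sup>+s. F (c * s) \<partial>lborel)"
    using nn_integral_real_affine[of F c 0] \<open>0 < c\<close> by simp
  moreover have "F (c * s) = hcontent \<beta> {x \<in> A. f x > s} * indicator {0..} s" for s
    using \<open>0 < c\<close> by (auto simp: F_def indicator_def zero_le_mult_iff)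
  ultimately show ?thesis
    unfolding choquet_def F_def by simp
qed

lemma quasicontinuous_on_compose:
  assumes "continuous_on UNIV \<phi>" "quasicontinuous_on \<beta> Q f"
  shows "quasicontinuous_on \<beta> Q (\<phi> \<circ> f)"
  unfolding quasicontinuous_on_def
proof (intro allI impI)
  fix \<epsilon> :: real assume "\<epsilon> > 0"
  then obtain U where "open U" "hcontent \<beta> U < ennreal \<epsilon>" "continuous_on (Q - U) f"
    using assms(2) unfolding quasicontinuous_on_def by blast
  then show "\<exists>U. open U \<and> hcontent \<beta> U < ennreal \<epsilon> \<and> continuous_on (Q - U) (\<phi> \<circ> f)"
    by (intro exI[of _ U]) (auto intro: continuous_on_compose2[OF assms(1)])
qed

lemma L1_H_lipschitz_compose:
  assumes "lipschitz_on L UNIV \<phi>" "\<phi> 0 = 0" "f \<in> L1_H \<beta> Q"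
  shows "\<phi> \<circ> f \<in> L1_H \<beta> Q"
proof -
  have "choquet \<beta> Q (\<lambda>x. \<bar>(\<phi> \<circ> f) x\<bar>) \<le> choquet \<beta> Q (\<lambda>x. L * \<bar>f x\<bar>)"
    using lipschitz_onD[OF assms(1), of "f _" 0] assms(2) by (intro choquet_mono) (auto simp: dist_real_def)
  also have "\<dots> = ennreal L * choquet \<beta> Q (\<lambda>x. \<bar>f x\<bar>)"
    using lipschitz_on_nonneg[OF assms(1)] by (rule choquet_cmult)
  also have "\<dots> < \<infinity>"
    using assms(3) unfolding L1_H_def by (simp add: ennreal_mult_less_top)
  finally show ?thesis
    using assms(3) quasicontinuous_on_compose[OF lipschitz_on_continuous_on[OF assms(1)]]
    unfolding L1_H_def by auto
qed

lemma mean_oscillation_lipschitz_compose: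
  assumes "lipschitz_on L UNIV \<phi>"
  shows "(INF c. ennreal s * choquet \<beta> A (\<lambda>x. \<bar>(\<phi> \<circ> f) x - c\<bar>))
    \<le> ennreal L * (INF c. ennreal s * choquet \<beta> A (\<lambda>x. \<bar>f x - c\<bar>))"
proof -
  have L: "0 \<le> L"
    using assms by (rule lipschitz_on_nonneg)
  have "(INF c. ennreal s * choquet \<beta> A (\<lambda>x. \<bar>(\<phi> \<circ> f) x - c\<bar>))
      \<le> (INF c. ennreal s * choquet \<beta> A (\<lambda>x. \<bar>\<phi> (f x) - \<phi> c\<bar>))"
    by (rule INF_mono) auto
  also have "\<dots> \<le> (INF c. ennreal s * choquet \<beta> A (\<lambda>x. L * \<bar>f x - c\<bar>))"
    using lipschitz_onD[OF assms] by (intro INF_mono' mult_left_mono choquet_mono) (auto simp: dist_real_def)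
  also have "\<dots> = ennreal L * (INF c. ennreal s * choquet \<beta> A (\<lambda>x. \<bar>f x - c\<bar>))"
    using L by (simp add: choquet_cmult ennreal_mult_INF ac_simps)
  finally show ?thesis .
qed

lemma bmo_norm_lipschitz_compose:
  assumes "lipschitz_on L UNIV \<phi>"
  shows "bmo_norm \<beta> Q (\<phi> \<circ> f) \<le> ennreal L * bmo_norm \<beta> Q f"
  unfolding bmo_norm_def SUP_mult_left_ennreal
  by (intro SUP_mono' mean_oscillation_lipschitz_compose[OF assms])

theorem theorem1p1:
  fixes u :: "'a::euclidean_space \<Rightarrow> real" and \<phi> :: "real \<Rightarrow> real"
    and \<beta> p l0 :: real and a0 :: 'a
  assumes "0 < \<beta>" "\<beta> \<le> real DIM('a)"
    and "1 \<le> p"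
    and "0 < l0"
    and "u \<in> BMO \<beta> (cube a0 l0)"
    and "\<exists>C. lipschitz_on C UNIV \<phi>"
    and "\<phi> 0 = 0"
  shows "(\<phi> \<circ> u) \<in> BMO \<beta> (cube a0 l0)
    \<and> bmo_norm \<beta> (cube a0 l0) (\<phi> \<circ> u) \<le> ennreal (Lip \<phi>) * bmo_norm \<beta> (cube a0 l0) u"
proof -
  have Lip: "lipschitz_on (Lip \<phi>) UNIV \<phi>"
    using assms(6) lipschitz_on_Lip by blast
  have norm_le: "bmo_norm \<beta> (cube a0 l0) (\<phi> \<circ> u) \<le> ennreal (Lip \<phi>) * bmo_norm \<beta> (cube a0 l0) u"
    using Lip by (rule bmo_norm_lipschitz_compose)
  also have "\<dots> < \<infinity>"
    using assms(5) unfolding BMO_def by (simp add: ennreal_mult_less_top)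
  finally show ?thesis
    using norm_le L1_H_lipschitz_compose[OF Lip assms(7)] assms(5) unfolding BMO_def by auto
qed

end
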